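(* Let $H_1$ and $H_2$ be graphs. If $\operatorname{obs}^\ast(H_1)\cap\operatorname{obs}^\ast(H_2)\ne\varnothing$ (up to isomorphism), then $H_1\cong H_2$.
   Context: All graphs are finite, simple and loopless. A full-homomorphism $\varphi\colon G\to H$ is a map $V(G)\to V(H)$ such that for all $x,y\in V(G)$, $xy\in E(G)$ if and only if $\varphi(x)\varphi(y)\in E(H)$. A full $H$-colouring of $G$ is a full-homomorphism $G\to H$. A minimal $H$-obstruction is a graph $G$ that admits no full $H$-colouring while every proper induced subgraph of $G$ admits one; $\operatorname{obs}(H)$ denotes the set of minimal $H$-obstructions (up to isomorphism), and $\operatorname{obs}^\ast(H)$ the set of minimal $H$-obstructions on exactly $|V(H)|+1$ vertices. *)

theory Defs
  imports Main
begin

definition graph :: "'a set \<Rightarrow> ('a \<Rightarrow> 'a \<Rightarrow> bool) \<Rightarrow> bool" where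
  "graph V E \<longleftrightarrow> finite V \<and> (\<forall>x y. E x y \<longrightarrow> x \<in> V \<and> y \<in> V)
     \<and> (\<forall>x y. E x y \<longrightarrow> E y x) \<and> (\<forall>x. \<not> E x x)"

definition full_hom :: "'a set \<Rightarrow> ('a \<Rightarrow> 'a \<Rightarrow> bool) \<Rightarrow> 'b set \<Rightarrow> ('b \<Rightarrow> 'b \<Rightarrow> bool) \<Rightarrow> ('a \<Rightarrow> 'b) \<Rightarrow> bool" where
  "full_hom V E W F f \<longleftrightarrow> (\<forall>x\<in>V. f x \<in> W) \<and> (\<forall>x\<in>V. \<forall>y\<in>V. E x y \<longleftrightarrow> F (f x) (f y))"

definition full_colourable :: "'a set \<Rightarrow> ('a \<Rightarrow> 'a \<Rightarrow> bool) \<Rightarrow> 'b set \<Rightarrow> ('b \<Rightarrow> 'b \<Rightarrow> bool) \<Rightarrow> bool" where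
  "full_colourable V E W F \<longleftrightarrow> (\<exists>f. full_hom V E W F f)"

definition induced :: "('a \<Rightarrow> 'a \<Rightarrow> bool) \<Rightarrow> 'a set \<Rightarrow> 'a \<Rightarrow> 'a \<Rightarrow> bool" where
  "induced E S = (\<lambda>x y. E x y \<and> x \<in> S \<and> y \<in> S)"

definition min_obs :: "'b set \<Rightarrow> ('b \<Rightarrow> 'b \<Rightarrow> bool) \<Rightarrow> 'a set \<Rightarrow> ('a \<Rightarrow> 'a \<Rightarrow> bool) \<Rightarrow> bool" where
  "min_obs W F V E \<longleftrightarrow> graph V E \<and> \<not> full_colourable V E W F
     \<and> (\<forall>S. S \<subset> V \<longrightarrow> full_colourable S (induced E S) W F)"

definition min_obs_star :: "'b set \<Rightarrow> ('b \<Rightarrow> 'b \<Rightarrow> bool) \<Rightarrow> 'a set \<Rightarrow> ('a \<Rightarrow> 'a \<Rightarrow> bool) \<Rightarrow> bool" where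
  "min_obs_star W F V E \<longleftrightarrow> min_obs W F V E \<and> card V = card W + 1"

definition graph_iso :: "'a set \<Rightarrow> ('a \<Rightarrow> 'a \<Rightarrow> bool) \<Rightarrow> 'b set \<Rightarrow> ('b \<Rightarrow> 'b \<Rightarrow> bool) \<Rightarrow> ('a \<Rightarrow> 'b) \<Rightarrow> bool" where
  "graph_iso V E W F f \<longleftrightarrow> bij_betw f V W \<and> (\<forall>x\<in>V. \<forall>y\<in>V. E x y \<longleftrightarrow> F (f x) (f y))"

end

theory Submission
  imports Defs
begin

text \<open>Deleting the vertex v of a minimal H-obstruction G leaves a full H-colouring of G - v,
which is a bijection onto V(H) as soon as G - v has no twins and |V(G)| = |V(H)| + 1.
By Sumner's theorem on point-determining graphs such a v always exists, because minimal
obstructions have no twins. Starting from a common obstruction of H1 and H2 one gets two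
bijective full colourings of the same graph G - v onto H1 and onto H2, hence H1 \<cong> H2.\<close>

definition point_determining :: "('a \<Rightarrow> 'a \<Rightarrow> bool) \<Rightarrow> 'a set \<Rightarrow> bool" where
  "point_determining D S \<longleftrightarrow> (\<forall>a\<in>S. \<forall>b\<in>S. a \<noteq> b \<longrightarrow> (\<exists>z\<in>S. D a z \<noteq> D b z))"

lemma card_image_less: "\<not> inj_on f A \<Longrightarrow> finite A \<Longrightarrow> card (f ` A) < card A"
  using card_image_le inj_on_iff_eq_card le_neq_implies_less by blast

lemma full_hom_induced_iff: "full_hom S (induced E S) W F f \<longleftrightarrow> full_hom S E W F f"
  by (auto simp: full_hom_def induced_def)

lemma full_hom_comp:
  "full_hom V E W F f \<Longrightarrow> full_hom W F X G h \<Longrightarrow> full_hom V E X G (h \<circ> f)"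
  by (simp add: full_hom_def)

lemma graph_iso_iff_bij_full_hom:
  "graph_iso V E W F f \<longleftrightarrow> bij_betw f V W \<and> full_hom V E W F f"
  by (auto simp: graph_iso_def full_hom_def bij_betw_def)

lemma graph_iso_inv_into:
  assumes "graph_iso V E W F f"
  shows "graph_iso W F V E (inv_into V f)"
proof -
  have bij: "bij_betw f V W" and edge: "\<forall>x\<in>V. \<forall>y\<in>V. E x y \<longleftrightarrow> F (f x) (f y)"
    using assms by (auto simp: graph_iso_def)
  have "F x y \<longleftrightarrow> E (inv_into V f x) (inv_into V f y)" if "x \<in> W" "y \<in> W" for x y
    using edge bij_betwE[OF bij_betw_inv_into[OF bij]] bij_betw_inv_into_right[OF bij] that
    by metis
  then show ?thesis
    using bij_betw_inv_into[OF bij] by (simp add: graph_iso_def)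
qed

lemma graph_iso_comp:
  "graph_iso V E W F f \<Longrightarrow> graph_iso W F X G h \<Longrightarrow> graph_iso V E X G (h \<circ> f)"
  by (auto simp: graph_iso_iff_bij_full_hom intro: bij_betw_trans full_hom_comp)

lemma graph_iso_delete_vertex:
  assumes "graph_iso V E W F g" and "v \<in> V"
  shows "full_hom (V - {v}) E (W - {g v}) F g"
proof -
  have "bij_betw g V W" using assms(1) by (simp add: graph_iso_def)
  then have "g x \<in> W - {g v}" if "x \<in> V - {v}" for x
    using assms(2) that by (auto dest: bij_betwE bij_betw_imp_inj_on inj_onD)
  then show ?thesis
    using assms(1) by (auto simp: graph_iso_def full_hom_def)
qed

lemma full_hom_inj_on:
  assumes "point_determining E V" and "full_hom V E W F f"
  shows "inj_on f V"
proof (rule inj_onI, rule ccontr)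
  fix a b assume ab: "a \<in> V" "b \<in> V" "f a = f b" "a \<noteq> b"
  then obtain z where z: "z \<in> V" "E a z \<noteq> E b z"
    using assms(1) by (auto simp: point_determining_def)
  have "E a z = E b z"
    using assms(2) ab z by (simp add: full_hom_def)
  with z show False by simp
qed

lemma full_hom_graph_iso:
  assumes "point_determining E V" and "full_hom V E W F f"
    and "finite W" and "card V = card W"
  shows "graph_iso V E W F f"
proof -
  have inj: "inj_on f V" using full_hom_inj_on[OF assms(1,2)] .
  have "f ` V \<subseteq> W" using assms(2) by (auto simp: full_hom_def)
  moreover have "card (f ` V) = card W" using card_image[OF inj] assms(4) by simp
  ultimately have "f ` V = W" using card_subset_eq[OF assms(3)] by blast
  with inj assms(2) show ?thesis by (simp add: graph_iso_iff_bij_full_hom bij_betw_def)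
qed

lemma min_obs_delete_vertex_full_hom:
  assumes "min_obs W F U D" and "v \<in> U"
  obtains f where "full_hom (U - {v}) D W F f"
proof -
  have "U - {v} \<subset> U" using assms(2) by blast
  with assms(1) have "full_colourable (U - {v}) (induced D (U - {v})) W F"
    by (simp add: min_obs_def)
  with that show ?thesis by (auto simp: full_colourable_def full_hom_induced_iff)
qed

text \<open>If a and b were twins, collapsing b onto a would extend a full colouring of G - b to G.\<close>
lemma min_obs_point_determining:
  assumes "min_obs W F U D"
  shows "point_determining D U"
proof (rule ccontr)
  assume "\<not> point_determining D U"
  then obtain a b where ab: "a \<in> U" "b \<in> U" "a \<noteq> b" and twin: "\<forall>z\<in>U. D a z = D b z"
    by (auto simp: point_determining_def)
  have sym: "D x y = D y x" for x y
    using assms by (auto simp: min_obs_def graph_def)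
  define h where "h x = (if x = b then a else x)" for x
  have h_in: "h x \<in> U - {b}" if "x \<in> U" for x
    using ab that by (simp add: h_def)
  have h_twin: "D x y = D (h x) y" if "y \<in> U" for x y
    using twin that by (simp add: h_def)
  have "D x y = D (h x) (h y)" if "x \<in> U" "y \<in> U" for x y
  proof -
    have "D x y = D y (h x)" using h_twin[OF that(2)] sym by simp
    also have "\<dots> = D (h x) (h y)" using h_twin[of "h x" y] h_in[OF that(1)] sym by simp
    finally show ?thesis .
  qed
  then have "full_hom U D (U - {b}) D h"
    using h_in by (simp add: full_hom_def)
  moreover obtain f where "full_hom (U - {b}) D W F f"
    using min_obs_delete_vertex_full_hom[OF assms ab(2)] .
  ultimately have "full_hom U D W F (f \<circ> h)" by (rule full_hom_comp)
  with assms show False by (auto simp: min_obs_def full_colourable_def)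
qed

text \<open>Removing v from the set U - S of observed vertices merges the distinct neighbourhoods
of the twins a, b of G - v, which differ only in v.\<close>
lemma card_neighbourhoods_le:
  assumes "finite U" and "S \<subseteq> U"
    and twins: "\<forall>v\<in>S. \<exists>a\<in>U. \<exists>b\<in>U. D a v \<noteq> D b v \<and> (\<forall>z\<in>U - {v}. D a z = D b z)"
  shows "card ((\<lambda>x. {z \<in> U - S. D x z}) ` U) + card S \<le> card U"
proof -
  have "finite S" using assms(1,2) by (rule finite_subset[rotated])
  then show ?thesis
    using assms(2) twins
  proof (induction S rule: finite_induct)
    case empty
    show ?case using card_image_le[OF assms(1)] by simp
  next
    case (insert v S)
    let ?N = "(\<lambda>x. {z \<in> U - S. D x z}) ` U"
    have IH: "card ?N + card S \<le> card U"
      using insert.IH insert.prems by simp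
    have N_insert: "(\<lambda>x. {z \<in> U - insert v S. D x z}) ` U = (\<lambda>M. M - {v}) ` ?N"
      unfolding image_image by (rule image_cong) auto
    obtain a b where ab: "a \<in> U" "b \<in> U" "D a v \<noteq> D b v" "\<forall>z\<in>U - {v}. D a z = D b z"
      using insert.prems(2) by blast
    have v: "v \<in> U - S" using insert.hyps(2) insert.prems(1) by simp
    have "{z \<in> U - S. D a z} \<noteq> {z \<in> U - S. D b z}"
    proof
      assume "{z \<in> U - S. D a z} = {z \<in> U - S. D b z}"
      then have "v \<in> {z \<in> U - S. D a z} \<longleftrightarrow> v \<in> {z \<in> U - S. D b z}"
        by (rule arg_cong[where f = "\<lambda>M. v \<in> M"])
      with v ab(3) show False by simp
    qed
    moreover have "{z \<in> U - S. D a z} - {v} = {z \<in> U - S. D b z} - {v}"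
      using ab(4) by auto
    ultimately have "\<not> inj_on (\<lambda>M. M - {v}) ?N"
      using ab(1,2) by (meson image_eqI inj_onD)
    moreover have "finite ?N" using assms(1) by simp
    ultimately have "card ((\<lambda>M. M - {v}) ` ?N) < card ?N"
      by (rule card_image_less)
    with IH N_insert insert.hyps show ?case by simp
  qed
qed

lemma point_determining_delete_vertex:
  assumes "finite U" and "U \<noteq> {}" and "point_determining D U"
  shows "\<exists>v\<in>U. point_determining D (U - {v})"
proof (rule ccontr)
  assume none: "\<not> (\<exists>v\<in>U. point_determining D (U - {v}))"
  have "\<exists>a\<in>U. \<exists>b\<in>U. D a v \<noteq> D b v \<and> (\<forall>z\<in>U - {v}. D a z = D b z)" if v: "v \<in> U" for v
  proof -
    from none v obtain a b where ab: "a \<in> U - {v}" "b \<in> U - {v}" "a \<noteq> b"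
      and agree: "\<forall>z\<in>U - {v}. D a z = D b z"
      unfolding point_determining_def by blast
    from assms(3) ab obtain z where z: "z \<in> U" "D a z \<noteq> D b z"
      unfolding point_determining_def by blast
    with agree have "z = v" by blast
    with z have "D a v \<noteq> D b v" by simp
    with ab agree show ?thesis by blast
  qed
  then have "\<forall>v\<in>U. \<exists>a\<in>U. \<exists>b\<in>U. D a v \<noteq> D b v \<and> (\<forall>z\<in>U - {v}. D a z = D b z)" by blast
  from card_neighbourhoods_le[OF assms(1) subset_refl this]
  have "card ((\<lambda>x. {z \<in> U - U. D x z}) ` U) = 0" by simp
  with assms(1,2) show False by simp
qed

theorem corollary3p6:
  fixes V1 :: "'a set" and E1 :: "'a \<Rightarrow> 'a \<Rightarrow> bool"
    and V2 :: "'b set" and E2 :: "'b \<Rightarrow> 'b \<Rightarrow> bool"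
    and U1 :: "'c set" and D1 :: "'c \<Rightarrow> 'c \<Rightarrow> bool"
    and U2 :: "'d set" and D2 :: "'d \<Rightarrow> 'd \<Rightarrow> bool"
    and g :: "'c \<Rightarrow> 'd"
  assumes "graph V1 E1" and "graph V2 E2"
    and "min_obs_star V1 E1 U1 D1" and "min_obs_star V2 E2 U2 D2"
    and "graph_iso U1 D1 U2 D2 g"
  shows "\<exists>f. graph_iso V1 E1 V2 E2 f"
proof -
  have obs1: "min_obs V1 E1 U1 D1" and obs2: "min_obs V2 E2 U2 D2"
    and card_U1: "card U1 = card V1 + 1" and card_U2: "card U2 = card V2 + 1"
    using assms(3,4) by (auto simp: min_obs_star_def)
  have "finite U1" using obs1 by (simp add: min_obs_def graph_def)
  moreover have "U1 \<noteq> {}" using card_U1 by auto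
  ultimately obtain v where v: "v \<in> U1" and pd: "point_determining D1 (U1 - {v})"
    using point_determining_delete_vertex min_obs_point_determining[OF obs1] by blast
  have "card U1 = card U2"
    using assms(5) bij_betw_same_card by (auto simp: graph_iso_def)
  with \<open>finite U1\<close> v card_U1 card_U2
  have card_V1: "card (U1 - {v}) = card V1" and card_V2: "card (U1 - {v}) = card V2"
    by simp_all
  obtain f1 where "full_hom (U1 - {v}) D1 V1 E1 f1"
    using min_obs_delete_vertex_full_hom[OF obs1 v] .
  with pd card_V1 assms(1) have iso1: "graph_iso (U1 - {v}) D1 V1 E1 f1"
    by (simp add: full_hom_graph_iso graph_def)
  obtain f2 where "full_hom (U2 - {g v}) D2 V2 E2 f2"
    using min_obs_delete_vertex_full_hom[OF obs2] assms(5) v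
    by (meson bij_betwE graph_iso_def)
  then have "full_hom (U1 - {v}) D1 V2 E2 (f2 \<circ> g)"
    by (rule full_hom_comp[OF graph_iso_delete_vertex[OF assms(5) v]])
  with pd card_V2 assms(2) have iso2: "graph_iso (U1 - {v}) D1 V2 E2 (f2 \<circ> g)"
    by (simp add: full_hom_graph_iso graph_def)
  show ?thesis
    using graph_iso_comp[OF graph_iso_inv_into[OF iso1] iso2] by blast
qed

end
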